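(* Let $X$ be a random variable taking values in a finite set $\mathcal X$ of size $s \ge 1$, and let $\ell := \log s - \mathcal H(X)$. Then for every $x \in \mathcal X$, \[ \mathbb P(X = x) \le \frac{2}{s} + \ell. \]
   Context: All logarithms are base $2$. The Shannon entropy of $X$ is $\mathcal H(X) = -\sum_{x\in\mathcal X}\mathbb P(X=x)\log \mathbb P(X=x)$, with the convention $0\log 0 = 0$. *)

theory Defs
  imports "HOL-Probability.Probability"
begin

text \<open>Shannon entropy (base 2) of a random variable X on a probability space M,
  taking values in the finite set A:
  H(X) = - sum over x in A of P(X = x) * log2 P(X = x), with 0 log 0 = 0.
  Note: log 2 0 = 0 in Isabelle, so the convention 0 log 0 = 0 holds automatically.\<close>
definition shannon_entropy :: "'s measure \<Rightarrow> ('s \<Rightarrow> 'a) \<Rightarrow> 'a set \<Rightarrow> real" where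
  "shannon_entropy M X A =
     - (\<Sum>x\<in>A. measure M {\<omega>\<in>space M. X \<omega> = x} * log 2 (measure M {\<omega>\<in>space M. X \<omega> = x}))"

end

theory Submission
  imports Defs
begin

text \<open>Write \<open>p\<close> for the distribution of \<open>X\<close> and \<open>s = |A|\<close>. Then \<open>\<ell> = \<Sum>\<^sub>y p y log (s p y)\<close> is the
  divergence of \<open>p\<close> from the uniform distribution. By \<open>ln t \<ge> 1 - 1/t\<close>, every summand is at least
  \<open>(p y - 1/s) / ln 2\<close>, and these lower bounds sum to \<open>0\<close>; so \<open>\<ell>\<close> dominates the slack of the summand
  at \<open>x\<close> alone. Applying the same inequality to \<open>s p x / 2\<close> instead shows that this slack is at least
  \<open>p x - 1/(s ln 2) \<ge> p x - 2/s\<close>.\<close>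

lemma mult_log_ge:
  fixes q a :: real
  assumes "q \<ge> 0" "a > 0"
  shows "(q - 1/a) / ln 2 \<le> q * log 2 (a * q)"
proof (cases "q = 0")
  case False
  with assms have "q > 0" by simp
  have "ln (1 / (a*q)) \<le> 1 / (a*q) - 1"
    using \<open>q > 0\<close> assms by (intro ln_le_minus_one) auto
  then have "q - 1/a \<le> q * ln (a*q)"
    using \<open>q > 0\<close> assms by (simp add: ln_div field_simps)
  then show ?thesis by (simp add: log_def divide_right_mono)
qed (use assms in simp)

lemma mult_log_ge_doubled:
  fixes q a :: real
  assumes "q \<ge> 0" "a > 0"
  shows "q + (q - 2/a) / ln 2 \<le> q * log 2 (a * q)"
proof (cases "q = 0")
  case False
  have "log 2 (a * q) = log 2 (2 * (a/2 * q))" by simp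
  also have "\<dots> = 1 + log 2 (a/2 * q)"
    using assms False by (subst log_mult) auto
  finally have "log 2 (a * q) = 1 + log 2 (a/2 * q)" .
  moreover have "(q - 2/a) / ln 2 \<le> q * log 2 (a/2 * q)"
    using mult_log_ge[of q "a/2"] assms by simp
  ultimately show ?thesis by (simp add: distrib_left)
qed (use assms in simp)

lemma sum_mult_log_scaled:
  fixes p :: "'a \<Rightarrow> real" and c :: real
  assumes "(\<Sum>y\<in>A. p y) = 1" "c > 0"
  shows "(\<Sum>y\<in>A. p y * log b (c * p y)) = log b c + (\<Sum>y\<in>A. p y * log b (p y))"
proof -
  have "p y * log b (c * p y) = p y * log b c + p y * log b (p y)" for y
    using \<open>c > 0\<close> by (cases "p y = 0") (simp_all add: log_mult distrib_left)
  then have "(\<Sum>y\<in>A. p y * log b (c * p y)) = (\<Sum>y\<in>A. p y) * log b c + (\<Sum>y\<in>A. p y * log b (p y))"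
    by (simp add: sum.distrib sum_distrib_right)
  with assms(1) show ?thesis by simp
qed

lemma point_mass_le_divergence_from_uniform:
  fixes p :: "'a \<Rightarrow> real"
  assumes "finite A" "x \<in> A" "\<forall>y\<in>A. p y \<ge> 0" "(\<Sum>y\<in>A. p y) = 1"
  defines "s \<equiv> real (card A)"
  shows "p x \<le> 2 / s + (\<Sum>y\<in>A. p y * log 2 (s * p y))"
proof -
  have "s > 0" using assms(1,2) by (auto simp: s_def card_gt_0_iff)
  define slack where "slack y = p y * log 2 (s * p y) - (p y - 1/s) / ln 2" for y
  have "(\<Sum>y\<in>A. (p y - 1/s) / ln 2) = 0"
    using assms(4) \<open>s > 0\<close> by (simp add: sum_divide_distrib[symmetric] sum_subtractf s_def)
  then have "(\<Sum>y\<in>A. p y * log 2 (s * p y)) = (\<Sum>y\<in>A. slack y)"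
    by (simp add: slack_def sum_subtractf)
  also have "slack x \<le> (\<Sum>y\<in>A. slack y)"
    using assms(1-3) mult_log_ge \<open>s > 0\<close> by (intro member_le_sum) (auto simp: slack_def)
  finally have "slack x \<le> (\<Sum>y\<in>A. p y * log 2 (s * p y))" .
  moreover have "p x - (1/s) / ln 2 \<le> slack x"
    using mult_log_ge_doubled[of "p x" s] assms(2,3) \<open>s > 0\<close>
    by (simp add: slack_def diff_divide_distrib)
  moreover have "(1/s) / ln 2 \<le> 2/s"
    using ln2_ge_two_thirds \<open>s > 0\<close> by (simp add: field_simps)
  ultimately show ?thesis by linarith
qed

lemma (in prob_space) sum_prob_eq_value_eq_1:
  assumes "finite A" "X \<in> measurable M (count_space A)"
  shows "(\<Sum>y\<in>A. prob {\<omega>\<in>space M. X \<omega> = y}) = 1"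
proof -
  have "{\<omega>\<in>space M. X \<omega> = y} \<in> events" if "y \<in> A" for y
    using measurable_sets[OF assms(2), of "{y}"] that by (simp add: vimage_def Int_def conj_commute)
  then have "prob (\<Union>y\<in>A. {\<omega>\<in>space M. X \<omega> = y}) = (\<Sum>y\<in>A. prob {\<omega>\<in>space M. X \<omega> = y})"
    using assms(1) by (intro measure_finite_Union) (auto simp: disjoint_family_on_def)
  moreover have "(\<Union>y\<in>A. {\<omega>\<in>space M. X \<omega> = y}) = space M"
    using measurable_space[OF assms(2)] by auto
  ultimately show ?thesis by (simp add: prob_space)
qed

theorem lemma3p3:
  fixes M :: "'s measure" and X :: "'s \<Rightarrow> 'a" and A :: "'a set" and x :: 'a
  assumes "prob_space M"
    and "finite A" and "card A \<ge> 1"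
    and "X \<in> measurable M (count_space A)"
    and "x \<in> A"
  shows "measure M {\<omega>\<in>space M. X \<omega> = x}
           \<le> 2 / real (card A) + (log 2 (real (card A)) - shannon_entropy M X A)"
proof -
  define p where "p y = measure M {\<omega>\<in>space M. X \<omega> = y}" for y
  have nonneg: "\<forall>y\<in>A. p y \<ge> 0" by (simp add: p_def)
  have sum_1: "(\<Sum>y\<in>A. p y) = 1"
    unfolding p_def using prob_space.sum_prob_eq_value_eq_1[OF assms(1,2,4)] .
  have "log 2 (real (card A)) - shannon_entropy M X A = (\<Sum>y\<in>A. p y * log 2 (card A * p y))"
    using sum_mult_log_scaled[OF sum_1, of "real (card A)" 2] assms(3)
    by (simp add: shannon_entropy_def p_def)
  with point_mass_le_divergence_from_uniform[OF assms(2,5) nonneg sum_1] show ?thesis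
    by (simp add: p_def)
qed

end
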